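(* Let $P$ be a poset and $\varphi:\Delta^n\to N(P)$ a not-necessarily injective simplicial map. Then there exist an injective simplicial map $\bar\varphi:\Delta^k\to N(P)$ and a topological space $K$ such that $\|\Delta^\varphi\|_P$ is a retract (in $\mathrm{Top}_P$) of $\|\Delta^{\bar\varphi}\|_P\otimes K$.
   Context: $\mathrm{Top}_P$: $\Delta$-generated spaces $X$ with continuous $\varphi_X:X\to P$ ($P$ with the Alexandrov topology), maps commuting over $P$. $\varphi_P:\|N(P)\|\to P$ sends a point $(\{p_0<\dots<p_m\},t)$, $t$ in the interior of $\Delta^m$, to $p_m$. For a simplicial map $\psi:\Delta^m\to N(P)$, $\|\Delta^\psi\|_P=(\|\Delta^m\|,\varphi_P\circ\|\psi\|)$. For a space $K$, $(X,\varphi_X)\otimes K=(X\times K,\varphi_X\circ pr_X)$. *)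

theory Defs
  imports "HOL-Analysis.Analysis" "HOL-Homology.Homology"
begin

definition simplex_top :: "nat \<Rightarrow> (nat \<Rightarrow> real) topology" where
  "simplex_top n = subtopology (powertop_real UNIV) (standard_simplex n)"

definition delta_generated :: "'a topology \<Rightarrow> bool" where
  "delta_generated X \<longleftrightarrow>
     (\<forall>U. U \<subseteq> topspace X \<longrightarrow>
        (\<forall>m \<sigma>. continuous_map (simplex_top m) X \<sigma> \<longrightarrow>
            openin (simplex_top m) {x \<in> topspace (simplex_top m). \<sigma> x \<in> U})
        \<longrightarrow> openin X U)"

text \<open>A simplicial map Delta^n -> N(P) is the same as an n-simplex of N(P),
  i.e. a monotone sequence f 0 \<le> ... \<le> f n in P.\<close>
definition simplicial_to_nerve :: "nat \<Rightarrow> (nat \<Rightarrow> 'p::order) \<Rightarrow> bool" where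
  "simplicial_to_nerve n f \<longleftrightarrow> monotone_on {..n} (\<le>) (\<le>) f"

text \<open>The stratification phi_P o ||f|| of |Delta^n|: a point t lies in the interior
  of the nondegenerate simplex of N(P) spanned by {f i | t i > 0}; phi_P sends it to
  the maximal vertex of that chain.\<close>
definition delta_strat :: "nat \<Rightarrow> (nat \<Rightarrow> 'p::order) \<Rightarrow> (nat \<Rightarrow> real) \<Rightarrow> 'p" where
  "delta_strat n f t =
     (THE p. p \<in> f ` {i. i \<le> n \<and> 0 < t i} \<and> (\<forall>q \<in> f ` {i. i \<le> n \<and> 0 < t i}. q \<le> p))"

definition stratified_retract ::
  "'a topology \<Rightarrow> ('a \<Rightarrow> 'p) \<Rightarrow> 'b topology \<Rightarrow> ('b \<Rightarrow> 'p) \<Rightarrow> bool" where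
  "stratified_retract X phiX Y phiY \<longleftrightarrow>
     (\<exists>i r. continuous_map X Y i \<and> continuous_map Y X r \<and>
        (\<forall>x \<in> topspace X. phiY (i x) = phiX x) \<and>
        (\<forall>y \<in> topspace Y. phiX (r y) = phiY y) \<and>
        (\<forall>x \<in> topspace X. r (i x) = x))"

definition strat_tensor ::
  "'a topology \<Rightarrow> ('a \<Rightarrow> 'p) \<Rightarrow> 'k topology \<Rightarrow> ('a \<times> 'k) topology \<times> ('a \<times> 'k \<Rightarrow> 'p)" where
  "strat_tensor X phi K = (prod_topology X K, \<lambda>z. phi (fst z))"

end

theory Submission
  imports Defs
begin

text \<open>Factor the chain \<open>f\<close> as \<open>g \<circ> h\<close> with \<open>g\<close> injective and \<open>h : {0..n} \<rightarrow> {0..k}\<close>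
  surjective. The affine realization \<open>|h| : |\<Delta>\<^sup>n| \<rightarrow> |\<Delta>\<^sup>k|\<close> preserves strata, so
  \<open>t \<mapsto> (|h| t, t)\<close> embeds \<open>\<parallel>\<Delta>\<^sup>f\<parallel>\<^sub>P\<close> into \<open>\<parallel>\<Delta>\<^sup>g\<parallel>\<^sub>P \<otimes> |\<Delta>\<^sup>n|\<close>. A retraction
  redistributes each weight \<open>s j\<close> over the fibre \<open>h\<^sup>-\<^sup>1 j\<close>, following \<open>t\<close> as far as
  possible: vertex \<open>i\<close> receives \<open>min (t i) (s j)\<close> plus the excess
  \<open>max 0 (s j - |h| t j)\<close>. After normalisation this depends continuously on \<open>(s, t)\<close>,
  returns \<open>t\<close> when \<open>s = |h| t\<close>, and its support is mapped by \<open>h\<close> onto the support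
  of \<open>s\<close>, so it lies in the stratum of \<open>s\<close>.\<close>

lemma image_fun_upd_atMost_Suc: "h(Suc n := y) ` {..Suc n} = insert y (h ` {..n})"
proof -
  have "h(Suc n := y) ` {..n} = h ` {..n}" by (rule image_cong) auto
  then show ?thesis by (simp only: atMost_Suc image_insert fun_upd_same)
qed

lemma monotone_inj_on_append:
  fixes g :: "nat \<Rightarrow> 'a::order"
  assumes mono: "monotone_on {..k} (\<le>) (\<le>) g" and inj: "inj_on g {..k}"
    and below: "\<And>j. j \<le> k \<Longrightarrow> g j < x"
  shows "monotone_on {..Suc k} (\<le>) (\<le>) (g(Suc k := x))" and "inj_on (g(Suc k := x)) {..Suc k}"
proof -
  let ?g = "g(Suc k := x)"
  show "monotone_on {..Suc k} (\<le>) (\<le>) ?g"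
  proof (rule monotone_onI)
    fix i j assume "i \<in> {..Suc k}" "j \<in> {..Suc k}" "i \<le> j"
    then consider "j \<le> k" | "i \<le> k" "j = Suc k" | "i = Suc k" "j = Suc k"
      by fastforce
    then show "?g i \<le> ?g j"
      by cases (use mono below \<open>i \<le> j\<close> in \<open>auto elim: monotone_onD intro: less_imp_le\<close>)
  qed
  show "inj_on ?g {..Suc k}"
  proof (rule inj_onI)
    fix i j assume "i \<in> {..Suc k}" "j \<in> {..Suc k}" "?g i = ?g j"
    then consider "i \<le> k" "j \<le> k" | "i \<le> k" "j = Suc k" | "i = Suc k" "j \<le> k" | "i = Suc k" "j = Suc k"
      by fastforce
    then show "i = j"
      by cases (use inj below[of i] below[of j] \<open>?g i = ?g j\<close> in \<open>auto dest: inj_onD\<close>)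
  qed
qed

lemma monotone_chain_factorization:
  fixes f :: "nat \<Rightarrow> 'a::order"
  assumes "monotone_on {..n} (\<le>) (\<le>) f"
  shows "\<exists>(k::nat) g h. monotone_on {..k} (\<le>) (\<le>) g \<and> inj_on g {..k} \<and>
           h ` {..n} = {..k} \<and> (\<forall>i\<le>n. f i = g (h i))"
  using assms
proof (induction n)
  case 0
  show ?case
    by (intro exI[of _ 0] exI[of _ f] exI[of _ "\<lambda>_. 0"]) (auto simp: monotone_on_def)
next
  case (Suc n)
  have "monotone_on {..n} (\<le>) (\<le>) f"
    using Suc.prems by (rule monotone_on_subset) auto
  then obtain k :: nat and g h where g: "monotone_on {..k} (\<le>) (\<le>) g" "inj_on g {..k}"
    and h: "h ` {..n} = {..k}" "\<forall>i\<le>n. f i = g (h i)"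
    using Suc.IH by blast
  have h_le: "h i \<le> k" if "i \<le> n" for i
    using h(1) that by blast
  show ?case
  proof (cases "f (Suc n) = f n")
    case True
    let ?h = "h(Suc n := h n)"
    have "?h ` {..Suc n} = {..k}"
      unfolding image_fun_upd_atMost_Suc h(1) using h_le by auto
    moreover have "\<forall>i\<le>Suc n. f i = g (?h i)"
      using h(2) True by (auto simp: le_Suc_eq)
    ultimately show ?thesis
      using g by blast
  next
    case False
    have below: "g j < f (Suc n)" if "j \<le> k" for j
    proof -
      obtain i where "i \<le> n" "g j = f i"
        using h \<open>j \<le> k\<close> by (metis atMost_iff imageE)
      moreover have "f i \<le> f n" "f n \<le> f (Suc n)"
        using Suc.prems \<open>i \<le> n\<close> by (auto elim!: monotone_onD)
      ultimately show ?thesis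
        using False by (metis order_le_less_trans order_less_le)
    qed
    let ?g = "g(Suc k := f (Suc n))" and ?h = "h(Suc n := Suc k)"
    have "?h ` {..Suc n} = {..Suc k}"
      unfolding image_fun_upd_atMost_Suc h(1) by (simp add: atMost_Suc)
    moreover have "f i = ?g (?h i)" if "i \<le> Suc n" for i
      using that h(2) h_le[of i] by (auto simp: le_Suc_eq)
    ultimately show ?thesis
      using monotone_inj_on_append[OF g below] by blast
  qed
qed

definition simplex_support :: "nat \<Rightarrow> (nat \<Rightarrow> real) \<Rightarrow> nat set" where
  "simplex_support n t = {i. i \<le> n \<and> 0 < t i}"

lemma delta_strat_factor:
  assumes "\<forall>i\<le>n. f i = g (h i)" and "h ` simplex_support n t = simplex_support k s"
  shows "delta_strat k g s = delta_strat n f t"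
proof -
  have "f ` simplex_support n t = g ` h ` simplex_support n t"
    using assms(1) by (force simp: simplex_support_def)
  then show ?thesis
    using assms(2) by (simp add: delta_strat_def simplex_support_def)
qed

lemma standard_simplex_nonneg: "t \<in> standard_simplex n \<Longrightarrow> 0 \<le> t i"
  by (simp add: standard_simplex_def)

lemma standard_simplex_sum: "t \<in> standard_simplex n \<Longrightarrow> (\<Sum>i\<le>n. t i) = 1"
  by (simp add: standard_simplex_def)

lemma standard_simplexI:
  assumes "\<And>i. 0 \<le> t i" and "\<And>i. n < i \<Longrightarrow> t i = 0" and "(\<Sum>i\<le>n. t i) = 1"
  shows "t \<in> standard_simplex n"
proof -
  have "t i \<le> 1" for i
  proof (cases "i \<le> n")
    case True
    then show ?thesis
      using member_le_sum[of i "{..n}" t] assms(1,3) by simp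
  qed (use assms(2) in simp)
  with assms show ?thesis by (simp add: standard_simplex_def)
qed

lemma simplex_support_nonempty:
  assumes "t \<in> standard_simplex n"
  shows "simplex_support n t \<noteq> {}"
proof
  assume "simplex_support n t = {}"
  then have "\<forall>i\<le>n. t i = 0"
    using standard_simplex_nonneg[OF assms] by (force simp: simplex_support_def order_less_le)
  then show False
    using standard_simplex_sum[OF assms] by simp
qed

lemma topspace_simplex_top [simp]: "topspace (simplex_top n) = standard_simplex n"
  by (simp add: simplex_top_def)

lemma continuous_map_simplex_top_coordinate:
  "continuous_map (simplex_top n) euclideanreal (\<lambda>x. x i)"
  unfolding simplex_top_def
  by (intro continuous_map_from_subtopology continuous_map_product_projection) simp

lemma continuous_map_prod_simplex_top_coordinate:
  "continuous_map (prod_topology (simplex_top k) (simplex_top n)) euclideanreal (\<lambda>z. fst z i)"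
  "continuous_map (prod_topology (simplex_top k) (simplex_top n)) euclideanreal (\<lambda>z. snd z i)"
  using continuous_map_compose[OF continuous_map_fst continuous_map_simplex_top_coordinate]
    continuous_map_compose[OF continuous_map_snd continuous_map_simplex_top_coordinate]
  by (simp_all add: o_def)

lemma continuous_map_into_simplex_top:
  "continuous_map X (simplex_top n) F \<longleftrightarrow>
     (\<forall>i. continuous_map X euclideanreal (\<lambda>x. F x i)) \<and> F ` topspace X \<subseteq> standard_simplex n"
  by (auto simp: simplex_top_def continuous_map_in_subtopology continuous_map_componentwise_UNIV)

lemma delta_generated_simplex_top: "delta_generated (simplex_top n)"
  unfolding delta_generated_def
proof (intro allI impI)
  fix U
  assume U: "U \<subseteq> topspace (simplex_top n)"
    and "\<forall>m \<sigma>. continuous_map (simplex_top m) (simplex_top n) \<sigma> \<longrightarrow>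
           openin (simplex_top m) {x \<in> topspace (simplex_top m). \<sigma> x \<in> U}"
  then have "openin (simplex_top n) {x \<in> topspace (simplex_top n). id x \<in> U}"
    using continuous_map_id by blast
  moreover have "{x \<in> topspace (simplex_top n). id x \<in> U} = U"
    using U by auto
  ultimately show "openin (simplex_top n) U" by simp
qed

locale simplex_surjection =
  fixes n k :: nat and h :: "nat \<Rightarrow> nat"
  assumes onto: "h ` {..n} = {..k}"
begin

lemma maps_into: "i \<le> n \<Longrightarrow> h i \<le> k"
  using onto by blast

lemma fibre_nonempty: "j \<le> k \<Longrightarrow> \<exists>i\<le>n. h i = j"
  using onto by (metis atMost_iff imageE)

definition push :: "(nat \<Rightarrow> real) \<Rightarrow> nat \<Rightarrow> real" where
  "push t j = (\<Sum>i | i \<le> n \<and> h i = j. t i)"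

definition lift_weight :: "(nat \<Rightarrow> real) \<Rightarrow> (nat \<Rightarrow> real) \<Rightarrow> nat \<Rightarrow> real" where
  "lift_weight s t i = min (t i) (s (h i)) + max 0 (s (h i) - push t (h i))"

definition lift :: "(nat \<Rightarrow> real) \<Rightarrow> (nat \<Rightarrow> real) \<Rightarrow> nat \<Rightarrow> real" where
  "lift s t i = (if i \<le> n then lift_weight s t i / (\<Sum>l\<le>n. lift_weight s t l) else 0)"

lemma push_nonneg: "t \<in> standard_simplex n \<Longrightarrow> 0 \<le> push t j"
  unfolding push_def by (intro sum_nonneg standard_simplex_nonneg)

lemma push_ge: "t \<in> standard_simplex n \<Longrightarrow> i \<le> n \<Longrightarrow> t i \<le> push t (h i)"
  unfolding push_def by (intro member_le_sum standard_simplex_nonneg) auto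

lemma push_pos_iff:
  assumes "t \<in> standard_simplex n"
  shows "0 < push t j \<longleftrightarrow> (\<exists>i\<le>n. h i = j \<and> 0 < t i)"
proof -
  have "push t j = 0 \<longleftrightarrow> (\<forall>i\<le>n. h i = j \<longrightarrow> t i = 0)"
    unfolding push_def using standard_simplex_nonneg[OF assms]
    by (subst sum_nonneg_eq_0_iff) auto
  then show ?thesis
    using push_nonneg[OF assms, of j] standard_simplex_nonneg[OF assms]
    by (auto simp: order_less_le)
qed

lemma sum_push: "(\<Sum>j\<le>k. push t j) = (\<Sum>i\<le>n. t i)"
  unfolding push_def using sum.group[of "{..n}" "{..k}" h t] onto by (auto simp: atMost_def)

lemma push_in_standard_simplex:
  assumes "t \<in> standard_simplex n"
  shows "push t \<in> standard_simplex k"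
proof (rule standard_simplexI)
  show "push t j = 0" if "k < j" for j
    unfolding push_def using maps_into that by (intro sum.neutral) force
qed (use assms push_nonneg standard_simplex_sum in \<open>simp_all add: sum_push\<close>)

lemma push_support:
  "t \<in> standard_simplex n \<Longrightarrow> h ` simplex_support n t = simplex_support k (push t)"
  using maps_into by (auto simp: simplex_support_def push_pos_iff)

lemma continuous_map_push: "continuous_map (simplex_top n) (simplex_top k) push"
proof -
  have "continuous_map (simplex_top n) euclideanreal (\<lambda>t. push t j)" for j
    unfolding push_def
    by (intro continuous_map_sum continuous_map_simplex_top_coordinate) auto
  then show ?thesis
    by (auto simp: continuous_map_into_simplex_top push_in_standard_simplex)
qed

lemma lift_weight_nonneg:
  assumes "s \<in> standard_simplex k" and "t \<in> standard_simplex n"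
  shows "0 \<le> lift_weight s t i"
  using standard_simplex_nonneg[OF assms(1), of "h i"] standard_simplex_nonneg[OF assms(2), of i]
  by (simp add: lift_weight_def)

lemma lift_weight_support:
  assumes s: "s \<in> standard_simplex k" and t: "t \<in> standard_simplex n"
  shows "h ` simplex_support n (lift_weight s t) = simplex_support k s"
proof (intro equalityI subsetI)
  fix j assume "j \<in> h ` simplex_support n (lift_weight s t)"
  then obtain i where i: "i \<le> n" "0 < lift_weight s t i" "j = h i"
    by (auto simp: simplex_support_def)
  have "s (h i) \<noteq> 0"
  proof
    assume "s (h i) = 0"
    then have "lift_weight s t i = 0"
      using standard_simplex_nonneg[OF t, of i] push_nonneg[OF t]
      by (simp add: lift_weight_def)
    with i show False by simp
  qed
  then show "j \<in> simplex_support k s"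
    using standard_simplex_nonneg[OF s, of j] maps_into i
    by (auto simp: simplex_support_def order_less_le)
next
  fix j assume "j \<in> simplex_support k s"
  then have j: "j \<le> k" "0 < s j" by (simp_all add: simplex_support_def)
  have "\<exists>i\<le>n. h i = j \<and> 0 < lift_weight s t i"
  proof (cases "push t j < s j")
    case True
    obtain i where "i \<le> n" "h i = j"
      using fibre_nonempty j by blast
    moreover have "0 \<le> t i" by (rule standard_simplex_nonneg[OF t])
    ultimately show ?thesis
      using True j by (intro exI[of _ i]) (auto simp: lift_weight_def)
  next
    case False
    then obtain i where "i \<le> n" "h i = j" "0 < t i"
      using j push_pos_iff[OF t] by force
    with j push_nonneg[OF t] show ?thesis
      by (intro exI[of _ i]) (auto simp: lift_weight_def)
  qed
  then show "j \<in> h ` simplex_support n (lift_weight s t)"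
    by (force simp: simplex_support_def)
qed

lemma sum_lift_weight_pos:
  assumes s: "s \<in> standard_simplex k" and t: "t \<in> standard_simplex n"
  shows "0 < (\<Sum>l\<le>n. lift_weight s t l)"
proof -
  obtain i where "i \<le> n" "0 < lift_weight s t i"
    using simplex_support_nonempty[OF s] lift_weight_support[OF s t]
    by (auto simp: simplex_support_def)
  moreover have "lift_weight s t i \<le> (\<Sum>l\<le>n. lift_weight s t l)"
    using \<open>i \<le> n\<close> lift_weight_nonneg[OF s t] by (intro member_le_sum) auto
  ultimately show ?thesis by linarith
qed

lemma lift_in_standard_simplex:
  assumes s: "s \<in> standard_simplex k" and t: "t \<in> standard_simplex n"
  shows "lift s t \<in> standard_simplex n"
proof (rule standard_simplexI)
  let ?S = "\<Sum>l\<le>n. lift_weight s t l"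
  have "(\<Sum>i\<le>n. lift s t i) = (\<Sum>i\<le>n. lift_weight s t i / ?S)"
    by (simp add: lift_def)
  also have "\<dots> = ?S / ?S"
    by (rule sum_divide_distrib[symmetric])
  finally show "(\<Sum>i\<le>n. lift s t i) = 1"
    using sum_lift_weight_pos[OF s t] by simp
qed (use lift_weight_nonneg[OF s t] sum_lift_weight_pos[OF s t] in \<open>auto simp: lift_def\<close>)

lemma lift_support:
  assumes s: "s \<in> standard_simplex k" and t: "t \<in> standard_simplex n"
  shows "h ` simplex_support n (lift s t) = simplex_support k s"
proof -
  have "simplex_support n (lift s t) = simplex_support n (lift_weight s t)"
    using sum_lift_weight_pos[OF s t]
    by (auto simp: simplex_support_def lift_def zero_less_divide_iff)
  then show ?thesis
    using lift_weight_support[OF s t] by simp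
qed

lemma lift_push:
  assumes t: "t \<in> standard_simplex n"
  shows "lift (push t) t = t"
proof -
  have w: "lift_weight (push t) t i = t i" if "i \<le> n" for i
    using push_ge[OF t that] by (simp add: lift_weight_def)
  then have "(\<Sum>l\<le>n. lift_weight (push t) t l) = 1"
    using standard_simplex_sum[OF t] by simp
  with w t show ?thesis
    by (auto simp: lift_def standard_simplex_def fun_eq_iff)
qed

lemma continuous_map_lift:
  "continuous_map (prod_topology (simplex_top k) (simplex_top n)) (simplex_top n)
     (\<lambda>z. lift (fst z) (snd z))"
proof -
  let ?Y = "prod_topology (simplex_top k) (simplex_top n)"
  have weight: "continuous_map ?Y euclideanreal (\<lambda>z. lift_weight (fst z) (snd z) i)" for i
    unfolding lift_weight_def push_def
    by (intro continuous_map_add continuous_map_real_min continuous_map_real_max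
        continuous_map_diff continuous_map_sum continuous_map_prod_simplex_top_coordinate
        continuous_map_canonical_const) auto
  have "continuous_map ?Y euclideanreal (\<lambda>z. lift (fst z) (snd z) i)" for i
  proof (cases "i \<le> n")
    case True
    have "continuous_map ?Y euclideanreal
            (\<lambda>z. lift_weight (fst z) (snd z) i / (\<Sum>l\<le>n. lift_weight (fst z) (snd z) l))"
      using sum_lift_weight_pos
      by (intro continuous_map_real_divide continuous_map_sum weight) force+
    with True show ?thesis by (simp add: lift_def)
  qed (simp add: lift_def)
  then show ?thesis
    using lift_in_standard_simplex by (auto simp: continuous_map_into_simplex_top)
qed

lemma stratified_retract_push:
  assumes "\<forall>i\<le>n. f i = g (h i)"
  shows "stratified_retract (simplex_top n) (delta_strat n f)
           (prod_topology (simplex_top k) (simplex_top n)) (\<lambda>z. delta_strat k g (fst z))"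
  unfolding stratified_retract_def
proof (intro exI conjI ballI)
  show "continuous_map (simplex_top n) (prod_topology (simplex_top k) (simplex_top n))
          (\<lambda>t. (push t, t))"
    by (intro continuous_map_pairedI continuous_map_push continuous_map_id[unfolded id_def])
  show "continuous_map (prod_topology (simplex_top k) (simplex_top n)) (simplex_top n)
          (\<lambda>z. lift (fst z) (snd z))"
    by (rule continuous_map_lift)
  show "delta_strat k g (fst (push t, t)) = delta_strat n f t"
    if "t \<in> topspace (simplex_top n)" for t
    using delta_strat_factor[OF assms push_support] that by simp
  show "delta_strat n f (lift (fst z) (snd z)) = delta_strat k g (fst z)"
    if "z \<in> topspace (prod_topology (simplex_top k) (simplex_top n))" for z
    using delta_strat_factor[OF assms lift_support] that by auto
  show "lift (fst (push t, t)) (snd (push t, t)) = t"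
    if "t \<in> topspace (simplex_top n)" for t
    using lift_push that by simp
qed

end

theorem lemma3p3:
  fixes f :: "nat \<Rightarrow> 'p::order" and n :: nat
  assumes "simplicial_to_nerve n f"
  shows "\<exists>k g (K :: (nat \<Rightarrow> real) topology).
           simplicial_to_nerve k g \<and> inj_on g {..k} \<and> delta_generated K \<and>
           stratified_retract (simplex_top n) (delta_strat n f)
             (fst (strat_tensor (simplex_top k) (delta_strat k g) K))
             (snd (strat_tensor (simplex_top k) (delta_strat k g) K))"
proof -
  obtain k :: nat and g h where g: "monotone_on {..k} (\<le>) (\<le>) g" "inj_on g {..k}"
    and h: "h ` {..n} = {..k}" "\<forall>i\<le>n. f i = g (h i)"
    using monotone_chain_factorization assms unfolding simplicial_to_nerve_def by blast
  interpret simplex_surjection n k h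
    by unfold_locales (rule h(1))
  have "stratified_retract (simplex_top n) (delta_strat n f)
          (fst (strat_tensor (simplex_top k) (delta_strat k g) (simplex_top n)))
          (snd (strat_tensor (simplex_top k) (delta_strat k g) (simplex_top n)))"
    using stratified_retract_push[OF h(2)] by (simp add: strat_tensor_def)
  then show ?thesis
    using g delta_generated_simplex_top unfolding simplicial_to_nerve_def by blast
qed

end
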